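(* Let $m\ge2$ be an integer and let $a,b,c,d$ be complex roots of unity. Then $$1-\frac{(a+b)(c+d)}{m}-\frac{abcd}{m^2}\neq0.$$ *)

theory Defs
  imports "HOL-Analysis.Analysis"
begin

end

theory Submission
  imports Defs "Jordan_Normal_Form.Char_Poly"
begin

text \<open>
  Clearing denominators turns a vanishing expression into
  \<open>a b c d = m (m - (a + b) (c + d))\<close>. Since \<open>w = a b c d\<close> is a root of unity,
  \<open>1 / m = (m - (a + b) (c + d)) w\<^sup>N\<^sup>-\<^sup>1\<close> is an integer polynomial in a primitive
  \<open>N\<close>-th root of unity \<open>\<zeta>\<close>, hence an algebraic integer: it is an eigenvalue of the
  integer matrix of multiplication by that polynomial on \<open>\<int>[X]/(X\<^sup>N - 1)\<close>, with
  eigenvector \<open>(1, \<zeta>, \<dots>, \<zeta>\<^sup>N\<^sup>-\<^sup>1)\<close>. But \<open>1 / m\<close> is rational and not an integer.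
\<close>

lemma algebraic_int_eigenvalue_of_int_mat:
  fixes A :: "int mat" and x :: "'a :: field_char_0"
  assumes A: "A \<in> carrier_mat n n" and "eigenvalue (map_mat of_int A) x"
  shows "algebraic_int x"
proof -
  have "poly (char_poly (map_mat of_int A)) x = 0"
    using assms(2) eigenvalue_root_char_poly[of "map_mat of_int A" n] A by auto
  moreover have "char_poly (map_mat of_int A :: 'a mat) = map_poly of_int (char_poly A)"
    by (rule of_int_hom.char_poly_hom[OF A])
  moreover have "lead_coeff (char_poly A) = 1"
    using degree_monic_char_poly[OF A] by simp
  ultimately show ?thesis
    unfolding algebraic_int_altdef_ipoly by (intro exI[of _ "char_poly A"]) simp
qed

lemma power_mod_eq_of_power_eq_1:
  fixes z :: "'a :: monoid_mult"
  assumes "z ^ N = 1"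
  shows "z ^ (n mod N) = z ^ n"
proof -
  have "z ^ n = z ^ (N * (n div N) + n mod N)"
    by simp
  also have "\<dots> = (z ^ N) ^ (n div N) * z ^ (n mod N)"
    by (simp only: power_add power_mult)
  finally show ?thesis
    using assms by simp
qed

text \<open>Row \<open>i\<close> holds the coefficients of \<open>X\<^sup>i p(X)\<close> reduced modulo \<open>X\<^sup>N - 1\<close>.\<close>

definition poly_circulant_mat :: "nat \<Rightarrow> int poly \<Rightarrow> int mat" where
  "poly_circulant_mat N p =
     mat N N (\<lambda>(i, j). \<Sum>k | k \<le> degree p \<and> (i + k) mod N = j. coeff p k)"

lemma poly_circulant_mat_carrier: "poly_circulant_mat N p \<in> carrier_mat N N"
  by (simp add: poly_circulant_mat_def)

lemma poly_circulant_mat_row_sum: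
  fixes z :: "'a :: {comm_ring_1, ring_char_0}"
  assumes "z ^ N = 1" and "N > 0" and "i < N"
  shows "(\<Sum>j<N. of_int (poly_circulant_mat N p $$ (i, j)) * z ^ j)
           = z ^ i * poly (map_poly of_int p) z"
proof -
  have "(\<Sum>j<N. of_int (poly_circulant_mat N p $$ (i, j)) * z ^ j)
      = (\<Sum>j<N. \<Sum>k\<le>degree p. if (i + k) mod N = j then of_int (coeff p k) * z ^ j else 0)"
    using assms(3)
    by (intro sum.cong refl)
       (auto simp: poly_circulant_mat_def sum_distrib_right sum.If_cases Int_def intro!: sum.cong)
  also have "\<dots> = (\<Sum>k\<le>degree p. \<Sum>j<N. if (i + k) mod N = j then of_int (coeff p k) * z ^ j else 0)"
    by (rule sum.swap)
  also have "\<dots> = (\<Sum>k\<le>degree p. of_int (coeff p k) * z ^ ((i + k) mod N))"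
    using assms(2) by (intro sum.cong refl) (simp add: sum.delta)
  also have "\<dots> = (\<Sum>k\<le>degree p. z ^ i * (of_int (coeff p k) * z ^ k))"
    using assms(1) by (intro sum.cong refl) (simp add: power_mod_eq_of_power_eq_1 power_add)
  also have "\<dots> = z ^ i * poly (map_poly of_int p) z"
    by (simp add: poly_altdef degree_map_poly coeff_map_poly sum_distrib_left)
  finally show ?thesis .
qed

lemma poly_circulant_mat_eigenvector:
  fixes z :: "'a :: {comm_ring_1, ring_char_0}"
  assumes "z ^ N = 1" and "N > 0"
  shows "eigenvector (map_mat of_int (poly_circulant_mat N p)) (vec N (\<lambda>i. z ^ i))
           (poly (map_poly of_int p) z)"
  unfolding eigenvector_def
proof (intro conjI)
  show "vec N (\<lambda>i. z ^ i) \<in> carrier_vec (dim_row (map_mat of_int (poly_circulant_mat N p)))"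
    by (simp add: poly_circulant_mat_def)
  show "vec N (\<lambda>i. z ^ i) \<noteq> 0\<^sub>v (dim_row (map_mat of_int (poly_circulant_mat N p)))"
    using assms(2) by (auto simp: poly_circulant_mat_def vec_eq_iff)
  show "map_mat of_int (poly_circulant_mat N p) *\<^sub>v vec N (\<lambda>i. z ^ i)
      = poly (map_poly of_int p) z \<cdot>\<^sub>v vec N (\<lambda>i. z ^ i)"
  proof (rule eq_vecI)
    fix i
    assume "i < dim_vec (poly (map_poly of_int p) z \<cdot>\<^sub>v vec N (\<lambda>i. z ^ i))"
    then have i: "i < N"
      by simp
    have "(map_mat of_int (poly_circulant_mat N p) *\<^sub>v vec N (\<lambda>i. z ^ i)) $ i
        = (\<Sum>j<N. of_int (poly_circulant_mat N p $$ (i, j)) * z ^ j)"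
      using i poly_circulant_mat_carrier[of N p]
      by (simp add: scalar_prod_def lessThan_atLeast0)
    also have "\<dots> = z ^ i * poly (map_poly of_int p) z"
      using assms i by (rule poly_circulant_mat_row_sum)
    finally show "(map_mat of_int (poly_circulant_mat N p) *\<^sub>v vec N (\<lambda>i. z ^ i)) $ i
        = (poly (map_poly of_int p) z \<cdot>\<^sub>v vec N (\<lambda>i. z ^ i)) $ i"
      using i by (simp add: mult.commute)
  qed (simp add: poly_circulant_mat_def)
qed

lemma algebraic_int_poly_root_of_unity:
  fixes z :: "'a :: field_char_0"
  assumes "z ^ N = 1" and "N > 0"
  shows "algebraic_int (poly (map_poly of_int p) z)"
proof (rule algebraic_int_eigenvalue_of_int_mat[OF poly_circulant_mat_carrier])
  show "eigenvalue (map_mat of_int (poly_circulant_mat N p)) (poly (map_poly of_int p) z)"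
    using poly_circulant_mat_eigenvector[OF assms] unfolding eigenvalue_def by blast
qed

lemma finite_roots_of_unity_common_power:
  fixes A :: "'a :: monoid_mult set"
  assumes "finite A" and "\<forall>x\<in>A. \<exists>n>0. x ^ n = 1"
  shows "\<exists>N>0. \<forall>x\<in>A. x ^ N = 1"
  using assms
proof (induction A rule: finite_induct)
  case empty
  show ?case
    by auto
next
  case (insert x A)
  then obtain N where "N > 0" and N: "\<forall>y\<in>A. y ^ N = 1"
    by auto
  from insert.prems obtain n where "n > 0" and "x ^ n = 1"
    by auto
  have "y ^ (n * N) = 1" if "y \<in> A" for y
    using that N by (simp add: mult.commute[of n N] power_mult)
  with \<open>x ^ n = 1\<close> \<open>n > 0\<close> \<open>N > 0\<close> show ?case
    by (intro exI[of _ "n * N"]) (simp add: power_mult)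
qed

lemma root_of_unity_eq_power_cis:
  assumes "z ^ N = 1" and "N > 0"
  shows "\<exists>k. z = cis (2 * pi / N) ^ k"
proof -
  from assms Complex.bij_betw_roots_unity[OF assms(2)]
  obtain k where "z = cis (2 * pi * real k / real N)"
    by (auto simp: bij_betw_def)
  then have "z = cis (2 * pi / N) ^ k"
    unfolding Complex.DeMoivre by (simp add: mult.commute)
  then show ?thesis ..
qed

lemma not_algebraic_int_inverse_of_nat:
  assumes "m \<ge> 2"
  shows "\<not> algebraic_int (inverse (of_nat m) :: 'a :: {field_char_0, real_field})"
proof
  assume "algebraic_int (inverse (of_nat m) :: 'a)"
  also have "inverse (of_nat m) = (of_real (inverse (real m)) :: 'a)"
    by simp
  finally have "algebraic_int (inverse (real m))"
    by (simp only: algebraic_int_of_real_iff)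
  then have "inverse (real m) \<in> \<int>"
    by (intro rational_algebraic_int_is_int) auto
  then obtain j :: int where "inverse (real m) = of_int j"
    by (elim Ints_cases)
  moreover have "0 < inverse (real m)" "inverse (real m) < 1"
    using assms by (auto simp: inverse_less_1_iff)
  ultimately have "0 < j" "j < 1"
    by simp_all
  then show False
    by simp
qed

lemma inverse_eq_mult_root_of_unity_power:
  fixes M x w :: "'a :: field"
  assumes "M * x = w" and "w ^ N = 1" and "N > 0"
  shows "inverse M = x * w ^ (N - 1)"
proof (rule inverse_unique)
  have "M * (x * w ^ (N - 1)) = w * w ^ (N - 1)"
    by (simp only: mult.assoc[symmetric] assms(1))
  also have "\<dots> = w ^ N"
    using assms(3) by (simp flip: power_Suc)
  finally show "M * (x * w ^ (N - 1)) = 1"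
    using assms(2) by simp
qed

theorem lemma7p3:
  fixes m :: nat and a b c d :: complex
  assumes "m \<ge> 2"
    and "\<exists>n>0. a ^ n = 1" and "\<exists>n>0. b ^ n = 1"
    and "\<exists>n>0. c ^ n = 1" and "\<exists>n>0. d ^ n = 1"
  shows "1 - (a + b) * (c + d) / of_nat m - a * b * c * d / (of_nat m)^2 \<noteq> 0"
proof
  assume vanishing: "1 - (a + b) * (c + d) / of_nat m - a * b * c * d / (of_nat m)^2 = 0"
  define M :: complex where "M = of_nat m"
  define s where "s = (a + b) * (c + d)"
  define w where "w = a * b * c * d"
  obtain N where "N > 0" and N: "a ^ N = 1" "b ^ N = 1" "c ^ N = 1" "d ^ N = 1"
    using finite_roots_of_unity_common_power[of "{a, b, c, d}"] assms(2-5) by auto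
  define \<zeta> where "\<zeta> = cis (2 * pi / N)"
  have "\<zeta> ^ N = 1"
    using \<open>N > 0\<close> unfolding \<zeta>_def Complex.DeMoivre by simp
  obtain ka kb kc kd where powers: "a = \<zeta> ^ ka" "b = \<zeta> ^ kb" "c = \<zeta> ^ kc" "d = \<zeta> ^ kd"
    using N[THEN root_of_unity_eq_power_cis[OF _ \<open>N > 0\<close>]] unfolding \<zeta>_def by blast
  have "M^2 * (1 - s / M - w / M^2) = M * (M - s) - w"
    using assms(1) by (simp add: M_def field_simps power2_eq_square)
  then have "M * (M - s) = w"
    using vanishing by (simp add: M_def s_def w_def)
  moreover have "w ^ N = 1"
    using N by (simp add: w_def power_mult_distrib)
  ultimately have "inverse M = (M - s) * w ^ (N - 1)"
    using \<open>N > 0\<close> by (rule inverse_eq_mult_root_of_unity_power)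
  also have "\<dots> = poly (map_poly of_int
      (([:int m:] - (monom 1 ka + monom 1 kb) * (monom 1 kc + monom 1 kd))
        * (monom 1 ka * monom 1 kb * monom 1 kc * monom 1 kd) ^ (N - 1))) \<zeta>"
    by (simp add: M_def s_def w_def powers hom_distribs map_poly_monom poly_monom)
  finally have "algebraic_int (inverse M)"
    using algebraic_int_poly_root_of_unity[OF \<open>\<zeta> ^ N = 1\<close> \<open>N > 0\<close>] by simp
  then show False
    using not_algebraic_int_inverse_of_nat[OF assms(1), where 'a = complex] by (simp add: M_def)
qed

end
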